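(* Let $(G,g)$ be a six-dimensional semi-Riemannian Lie group with a subgroup $K\cong\mathrm{SU}(2)\times\mathrm{SO}(2)$, and let $\mathcal F$ be the left-invariant foliation generated by $K$, with tangent distribution $\mathcal V$. Let $\{A,B,C,T,X,Y\}$ be an orthonormal basis of the Lie algebra $\mathfrak g$ of $G$ such that $A,B,C$ span $\mathfrak{su}(2)$ with $[A,B]=2C$, $[C,A]=2B$, $[B,C]=2A$, $T$ spans $\mathfrak{so}(2)$ (so $X,Y$ span the orthogonal complement of $\mathfrak{su}(2)\times\mathfrak{so}(2)$), and suppose the remaining brackets have the form $[E,X]=e_{11}A+e_{12}B+e_{13}C+e_{14}T$, $[E,Y]=e_{21}A+e_{22}B+e_{23}C+e_{24}T$ for $E\in\{A,B,C\}$, $[T,X]=x_1X+y_1Y+t_{11}A+t_{12}B+t_{13}C+t_{14}T$, $[T,Y]=x_2X+y_2Y+t_{21}A+t_{22}B+t_{23}C+t_{24}T$, $[X,Y]=\rho X+\theta_1A+\theta_2B+\theta_3C+\theta_4T$, with real coefficients. Then $\mathcal F$ is conformal if and only if $$x_1=y_2\quad\text{and}\quad \varepsilon_Xx_2+\varepsilon_Yy_1=0.$$ In that case, $\mathcal F$ is semi-Riemannian if and only if $x_1=y_2=0$.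
   Context: A semi-Riemannian Lie group $(G,g)$ is a Lie group with a left-invariant non-degenerate metric $g$ of arbitrary signature; its Lie algebra is identified with the left-invariant vector fields. $K$ generates the foliation $\mathcal F$ by its left translates; $\mathcal V$ is spanned by the Lie algebra of $K$ and $\mathcal H$ (spanned by $X,Y$) is its orthogonal complement. Orthonormal means $g(E_i,E_j)=\varepsilon_{E_i}\delta_{ij}$ with $\varepsilon_{E_i}=g(E_i,E_i)\in\{\pm1\}$. With $\nabla$ the Levi-Civita connection and $\mathcal V$ also the orthogonal projection, $B^{\mathcal H}(E,F)=\tfrac12\mathcal V(\nabla_EF+\nabla_FE)$ for $E,F\in\mathcal H$. $\mathcal F$ is conformal if there is a vector field $V$ in $\mathcal V$ with $B^{\mathcal H}(E,F)=g(E,F)V$ for all $E,F\in\mathcal H$, and semi-Riemannian if $B^{\mathcal H}=0$. *)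

theory Defs
  imports Complex_Main
begin

text \<open>Index type for the orthonormal basis {A,B,C,T,X,Y} of the six-dimensional
  Lie algebra g. Elements of g are represented by their coordinates in this basis.\<close>

datatype idx = iA | iB | iC | iT | iX | iY

lemma UNIV_idx: "(UNIV :: idx set) = {iA, iB, iC, iT, iX, iY}"
  using idx.exhaust by auto

instance idx :: finite
  by standard (simp add: UNIV_idx)

type_synonym vec = "idx \<Rightarrow> real"

definition bas :: "idx \<Rightarrow> vec" where
  "bas i = (\<lambda>k. if k = i then 1 else 0)"

text \<open>Bilinear bracket determined by structure constants: c i j k is the
  e_k-coefficient of [e_i, e_j].\<close>
definition br :: "(idx \<Rightarrow> idx \<Rightarrow> idx \<Rightarrow> real) \<Rightarrow> vec \<Rightarrow> vec \<Rightarrow> vec" where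
  "br c u v = (\<lambda>k. \<Sum>i\<in>UNIV. \<Sum>j\<in>UNIV. u i * v j * c i j k)"

definition gm :: "(idx \<Rightarrow> real) \<Rightarrow> vec \<Rightarrow> vec \<Rightarrow> real" where
  "gm eps u v = (\<Sum>i\<in>UNIV. eps i * u i * v i)"

text \<open>Levi-Civita connection on left-invariant vector fields, determined by
  the Koszul formula 2 g(nabla_U V, Z) = g([U,V],Z) - g([V,Z],U) + g([Z,U],V).\<close>
definition nabla :: "(idx \<Rightarrow> idx \<Rightarrow> idx \<Rightarrow> real) \<Rightarrow> (idx \<Rightarrow> real) \<Rightarrow> vec \<Rightarrow> vec \<Rightarrow> vec" where
  "nabla c eps u v = (THE w. \<forall>z. 2 * gm eps w z =
      gm eps (br c u v) z - gm eps (br c v z) u + gm eps (br c z u) v)"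

text \<open>The vertical distribution V = span{A,B,C,T} (Lie algebra of K) and
  its orthogonal complement H = span{X,Y}.\<close>
definition Vsp :: "vec set" where
  "Vsp = {u. u iX = 0 \<and> u iY = 0}"

definition Hsp :: "vec set" where
  "Hsp = {u. u iA = 0 \<and> u iB = 0 \<and> u iC = 0 \<and> u iT = 0}"

text \<open>Orthogonal projection onto V (the basis is orthonormal).\<close>
definition Vproj :: "vec \<Rightarrow> vec" where
  "Vproj u = (\<lambda>k. if k = iX \<or> k = iY then 0 else u k)"

definition BH :: "(idx \<Rightarrow> idx \<Rightarrow> idx \<Rightarrow> real) \<Rightarrow> (idx \<Rightarrow> real) \<Rightarrow> vec \<Rightarrow> vec \<Rightarrow> vec" where
  "BH c eps E F = (\<lambda>k. (1/2) * Vproj (\<lambda>l. nabla c eps E F l + nabla c eps F E l) k)"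

definition conformal_fol :: "(idx \<Rightarrow> idx \<Rightarrow> idx \<Rightarrow> real) \<Rightarrow> (idx \<Rightarrow> real) \<Rightarrow> bool" where
  "conformal_fol c eps \<longleftrightarrow> (\<exists>V\<in>Vsp. \<forall>E\<in>Hsp. \<forall>F\<in>Hsp.
      BH c eps E F = (\<lambda>k. gm eps E F * V k))"

definition semi_riem_fol :: "(idx \<Rightarrow> idx \<Rightarrow> idx \<Rightarrow> real) \<Rightarrow> (idx \<Rightarrow> real) \<Rightarrow> bool" where
  "semi_riem_fol c eps \<longleftrightarrow> (\<forall>E\<in>Hsp. \<forall>F\<in>Hsp. BH c eps E F = (\<lambda>k. 0))"

definition lie_constants :: "(idx \<Rightarrow> idx \<Rightarrow> idx \<Rightarrow> real) \<Rightarrow> bool" where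
  "lie_constants c \<longleftrightarrow> (\<forall>u. br c u u = (\<lambda>k. 0)) \<and>
     (\<forall>u v w. (\<lambda>k. br c u (br c v w) k + br c v (br c w u) k + br c w (br c u v) k) = (\<lambda>k. 0))"

end

theory Submission
  imports Defs
begin

text \<open>By the Koszul formula, for horizontal E, F and vertical basis vectors e_k,
  2 B^H(E,F) has e_k-component eps_k (g([e_k,E],F) + g(E,[e_k,F])): the second fundamental
  form of H is governed by the g-symmetric part of ad(e_k) restricted to H. Since
  [su(2), H] lies in V, only ad(T) contributes, and on H it has the matrix
  ((x1, x2), (y1, y2)). Its symmetric part is a multiple of g on H exactly when x1 = y2 and
  eps_X x2 + eps_Y y1 = 0, and it vanishes exactly when moreover x1 = y2 = 0.\<close>

lemma eps_cancel:
  assumes "\<forall>i. eps i = 1 \<or> eps i = -1"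
  shows "eps i * (eps i * a) = (a::real)"
  using assms by (metis mult_1 mult_minus1 minus_minus)

lemma gm_bas_right: "gm eps u (bas k) = eps k * u k"
  by (cases k) (simp_all add: gm_def bas_def UNIV_idx)

lemma gm_expand_right: "gm eps u z = (\<Sum>k\<in>UNIV. z k * gm eps u (bas k))"
  by (simp only: gm_bas_right) (simp add: gm_def algebra_simps)

lemma br_bas_bas: "br c (bas i) (bas j) = c i j"
  by (rule ext, cases i; cases j; simp add: br_def bas_def UNIV_idx)

lemma br_bas_left: "br c (bas k) u l = (\<Sum>j\<in>UNIV. u j * c k j l)"
  by (cases k) (simp_all add: br_def bas_def UNIV_idx)

lemma br_bas_right: "br c v (bas k) l = (\<Sum>i\<in>UNIV. v i * c i k l)"
  by (cases k) (simp_all add: br_def bas_def UNIV_idx)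

lemma br_expand_left: "br c z u = (\<lambda>l. \<Sum>k\<in>UNIV. z k * br c (bas k) u l)"
  by (rule ext, simp only: br_bas_left sum_distrib_left) (simp add: br_def algebra_simps)

lemma br_expand_right: "br c v z = (\<lambda>l. \<Sum>k\<in>UNIV. z k * br c v (bas k) l)"
proof
  fix l
  have "(\<Sum>k\<in>UNIV. z k * br c v (bas k) l) = (\<Sum>k\<in>UNIV. \<Sum>i\<in>UNIV. v i * z k * c i k l)"
    by (simp add: br_bas_right sum_distrib_left algebra_simps)
  also have "\<dots> = br c v z l"
    unfolding br_def by (rule sum.swap)
  finally show "br c v z l = (\<Sum>k\<in>UNIV. z k * br c v (bas k) l)" by simp
qed

lemma gm_sum_left:
  "gm eps (\<lambda>l. \<Sum>k\<in>UNIV. z k * f k l) u = (\<Sum>k\<in>UNIV. z k * gm eps (f k) u)"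
proof -
  have "gm eps (\<lambda>l. \<Sum>k\<in>UNIV. z k * f k l) u
      = (\<Sum>i\<in>UNIV. \<Sum>k\<in>UNIV. z k * (eps i * f k i * u i))"
    unfolding gm_def by (simp add: sum_distrib_left sum_distrib_right algebra_simps)
  also have "\<dots> = (\<Sum>k\<in>UNIV. z k * gm eps (f k) u)"
    unfolding gm_def by (subst sum.swap) (simp add: sum_distrib_left)
  finally show ?thesis .
qed

definition koszul :: "(idx \<Rightarrow> idx \<Rightarrow> idx \<Rightarrow> real) \<Rightarrow> (idx \<Rightarrow> real) \<Rightarrow> vec \<Rightarrow> vec \<Rightarrow> vec \<Rightarrow> real"
  where "koszul c eps u v z =
    gm eps (br c u v) z - gm eps (br c v z) u + gm eps (br c z u) v"

lemma koszul_expand: "koszul c eps u v z = (\<Sum>k\<in>UNIV. z k * koszul c eps u v (bas k))"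
proof -
  have "koszul c eps u v z = (\<Sum>k\<in>UNIV. z k * gm eps (br c u v) (bas k))
      - (\<Sum>k\<in>UNIV. z k * gm eps (br c v (bas k)) u)
      + (\<Sum>k\<in>UNIV. z k * gm eps (br c (bas k) u) v)"
    unfolding koszul_def
    by (subst gm_expand_right, subst br_expand_right, subst br_expand_left,
      simp only: gm_sum_left)
  then show ?thesis
    unfolding koszul_def by (simp add: sum.distrib sum_subtractf algebra_simps)
qed

lemma nabla_koszul:
  assumes eps: "\<forall>i. eps i = 1 \<or> eps i = -1"
  shows "nabla c eps u v = (\<lambda>k. eps k * koszul c eps u v (bas k) / 2)"
  unfolding nabla_def koszul_def[symmetric]
proof (rule the_equality)
  show "\<forall>z. 2 * gm eps (\<lambda>k. eps k * koszul c eps u v (bas k) / 2) z = koszul c eps u v z"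
  proof
    fix z
    have "2 * gm eps (\<lambda>k. eps k * koszul c eps u v (bas k) / 2) z
        = (\<Sum>i\<in>UNIV. z i * (eps i * (eps i * koszul c eps u v (bas i))))"
      unfolding gm_def by (simp add: sum_distrib_left algebra_simps)
    also have "\<dots> = koszul c eps u v z"
      by (subst (2) koszul_expand) (simp add: eps_cancel[OF eps])
    finally show "2 * gm eps (\<lambda>k. eps k * koszul c eps u v (bas k) / 2) z
        = koszul c eps u v z" .
  qed
next
  fix w
  assume w: "\<forall>z. 2 * gm eps w z = koszul c eps u v z"
  show "w = (\<lambda>k. eps k * koszul c eps u v (bas k) / 2)"
  proof
    fix k
    have "2 * (eps k * w k) = koszul c eps u v (bas k)"
      using w[rule_format, of "bas k"] by (simp add: gm_bas_right)
    then have "eps k * koszul c eps u v (bas k) = 2 * w k"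
      using eps_cancel[OF eps, of k "2 * w k"] by (simp add: mult.left_commute)
    then show "w k = eps k * koszul c eps u v (bas k) / 2"
      by simp
  qed
qed

lemma br_add_left: "br c (\<lambda>k. u k + v k) w l = br c u w l + br c v w l"
  unfolding br_def by (simp add: algebra_simps sum.distrib)

lemma br_add_right: "br c w (\<lambda>k. u k + v k) l = br c w u l + br c w v l"
  unfolding br_def by (simp add: algebra_simps sum.distrib)

lemma alternating_constants_antisym:
  assumes alt: "\<And>u. br c u u = (\<lambda>k. 0)"
  shows "c j i l = - c i j l"
proof -
  have zero: "br c u u l = 0" for u
    using alt by simp
  have "br c (\<lambda>k. bas i k + bas j k) (\<lambda>k. bas i k + bas j k) l
      = c i i l + c i j l + c j i l + c j j l"
    by (simp add: br_add_left br_add_right br_bas_bas)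
  then show ?thesis
    using zero zero[of "bas i"] zero[of "bas j"] by (simp add: br_bas_bas)
qed

lemma br_antisym:
  assumes alt: "\<And>u. br c u u = (\<lambda>k. 0)"
  shows "br c v u = (\<lambda>l. - br c u v l)"
proof
  fix l
  have "br c v u l = (\<Sum>i\<in>UNIV. \<Sum>j\<in>UNIV. - (u j * v i * c j i l))"
    unfolding br_def
    by (intro sum.cong refl, subst alternating_constants_antisym[OF alt]) simp
  also have "\<dots> = - br c u v l"
    unfolding br_def by (subst sum.swap) (simp add: sum_negf)
  finally show "br c v u l = - br c u v l" .
qed

lemma gm_uminus_left: "gm eps (\<lambda>l. - f l) z = - gm eps f z"
  unfolding gm_def by (simp add: sum_negf)

lemma koszul_sym_part:
  assumes alt: "\<And>u. br c u u = (\<lambda>k. 0)"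
  shows "koszul c eps E F z + koszul c eps F E z
    = 2 * (gm eps (br c z E) F + gm eps (br c z F) E)"
  unfolding koszul_def br_antisym[OF alt, of E F] br_antisym[OF alt, of E z]
    br_antisym[OF alt, of F z] gm_uminus_left
  by simp

lemma BH_ad_sym_part:
  assumes alt: "\<And>u. br c u u = (\<lambda>k. 0)" and eps: "\<forall>i. eps i = 1 \<or> eps i = -1"
  shows "BH c eps E F k = (if k = iX \<or> k = iY then 0
    else eps k / 2 * (gm eps (br c (bas k) E) F + gm eps (br c (bas k) F) E))"
proof -
  have "BH c eps E F k = (if k = iX \<or> k = iY then 0
      else eps k / 4 * (koszul c eps E F (bas k) + koszul c eps F E (bas k)))"
    unfolding BH_def Vproj_def nabla_koszul[OF eps] by (simp add: field_simps)
  then show ?thesis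
    by (simp add: koszul_sym_part[OF alt])
qed

lemma gm_br_bas_Hsp:
  assumes "E \<in> Hsp" "F \<in> Hsp"
  shows "gm eps (br c (bas k) E) F
    = eps iX * (E iX * c k iX iX + E iY * c k iY iX) * F iX
    + eps iY * (E iX * c k iX iY + E iY * c k iY iY) * F iY"
  using assms by (simp add: Hsp_def gm_def br_bas_left UNIV_idx)

lemma BH_Hsp:
  assumes alt: "\<And>u. br c u u = (\<lambda>k. 0)" and eps: "\<forall>i. eps i = 1 \<or> eps i = -1"
    and "E \<in> Hsp" "F \<in> Hsp"
  shows "BH c eps E F k = (if k = iX \<or> k = iY then 0 else eps k / 2 *
    (2 * eps iX * c k iX iX * E iX * F iX + 2 * eps iY * c k iY iY * E iY * F iY
     + (eps iX * c k iY iX + eps iY * c k iX iY) * (E iX * F iY + E iY * F iX)))"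
  unfolding BH_ad_sym_part[OF alt eps] gm_br_bas_Hsp[OF assms(3,4)]
    gm_br_bas_Hsp[OF assms(4,3)]
  by (simp add: algebra_simps)

lemma BH_eq_gm_smult_iff:
  assumes alt: "\<And>u. br c u u = (\<lambda>k. 0)" and eps: "\<forall>i. eps i = 1 \<or> eps i = -1"
    and V: "V \<in> Vsp"
  shows "(\<forall>E\<in>Hsp. \<forall>F\<in>Hsp. BH c eps E F = (\<lambda>k. gm eps E F * V k)) \<longleftrightarrow>
    (\<forall>k\<in>{iA, iB, iC, iT}. c k iX iX = eps k * V k \<and> c k iY iY = eps k * V k
      \<and> eps iX * c k iY iX + eps iY * c k iX iY = 0)"
proof
  assume BH: "\<forall>E\<in>Hsp. \<forall>F\<in>Hsp. BH c eps E F = (\<lambda>k. gm eps E F * V k)"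
  have HX: "bas iX \<in> Hsp" and HY: "bas iY \<in> Hsp"
    by (simp_all add: Hsp_def bas_def)
  have eps_nz: "eps i \<noteq> 0" for i
    using eps by (metis zero_neq_one zero_neq_neg_one)
  show "\<forall>k\<in>{iA, iB, iC, iT}. c k iX iX = eps k * V k \<and> c k iY iY = eps k * V k
      \<and> eps iX * c k iY iX + eps iY * c k iX iY = 0"
  proof
    fix k :: idx
    assume k: "k \<in> {iA, iB, iC, iT}"
    have at_k: "BH c eps E F k = gm eps E F * V k" if "E \<in> Hsp" "F \<in> Hsp" for E F
      using BH that by simp
    have "eps k * c k iX iX = V k"
      using at_k[OF HX HX] k eps_nz[of iX]
      unfolding BH_Hsp[OF alt eps HX HX] gm_bas_right by (auto simp: bas_def)
    moreover have "eps k * c k iY iY = V k"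
      using at_k[OF HY HY] k eps_nz[of iY]
      unfolding BH_Hsp[OF alt eps HY HY] gm_bas_right by (auto simp: bas_def)
    moreover have "eps iX * c k iY iX + eps iY * c k iX iY = 0"
      using at_k[OF HX HY] k eps_nz[of k]
      unfolding BH_Hsp[OF alt eps HX HY] gm_bas_right by (auto simp: bas_def)
    ultimately show "c k iX iX = eps k * V k \<and> c k iY iY = eps k * V k
        \<and> eps iX * c k iY iX + eps iY * c k iX iY = 0"
      using eps_cancel[OF eps, of k] by metis
  qed
next
  assume coeffs: "\<forall>k\<in>{iA, iB, iC, iT}. c k iX iX = eps k * V k \<and> c k iY iY = eps k * V k
    \<and> eps iX * c k iY iX + eps iY * c k iX iY = 0"
  show "\<forall>E\<in>Hsp. \<forall>F\<in>Hsp. BH c eps E F = (\<lambda>k. gm eps E F * V k)"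
  proof (intro ballI ext)
    fix E F k
    assume EF: "E \<in> Hsp" "F \<in> Hsp"
    have gm_EF: "gm eps E F = eps iX * E iX * F iX + eps iY * E iY * F iY"
      using EF by (simp add: Hsp_def gm_def UNIV_idx)
    show "BH c eps E F k = gm eps E F * V k"
      using coeffs V
      by (cases k)
        (simp_all add: BH_Hsp[OF alt eps EF] gm_EF Vsp_def algebra_simps eps_cancel[OF eps])
  qed
qed

lemma conformal_fol_iff:
  assumes alt: "\<And>u. br c u u = (\<lambda>k. 0)" and eps: "\<forall>i. eps i = 1 \<or> eps i = -1"
  shows "conformal_fol c eps \<longleftrightarrow> (\<forall>k\<in>{iA, iB, iC, iT}.
    c k iX iX = c k iY iY \<and> eps iX * c k iY iX + eps iY * c k iX iY = 0)"
proof
  assume "conformal_fol c eps"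
  then obtain V where "V \<in> Vsp" "\<forall>E\<in>Hsp. \<forall>F\<in>Hsp. BH c eps E F = (\<lambda>k. gm eps E F * V k)"
    unfolding conformal_fol_def by blast
  then show "\<forall>k\<in>{iA, iB, iC, iT}.
      c k iX iX = c k iY iY \<and> eps iX * c k iY iX + eps iY * c k iX iY = 0"
    using BH_eq_gm_smult_iff[OF alt eps] by auto
next
  assume coeffs: "\<forall>k\<in>{iA, iB, iC, iT}.
    c k iX iX = c k iY iY \<and> eps iX * c k iY iX + eps iY * c k iX iY = 0"
  define V where "V k = (if k = iX \<or> k = iY then 0 else eps k * c k iX iX)" for k
  have "V \<in> Vsp"
    by (simp add: V_def Vsp_def)
  moreover have "\<forall>k\<in>{iA, iB, iC, iT}. c k iX iX = eps k * V k \<and> c k iY iY = eps k * V k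
      \<and> eps iX * c k iY iX + eps iY * c k iX iY = 0"
    using coeffs by (auto simp: V_def eps_cancel[OF eps])
  ultimately show "conformal_fol c eps"
    unfolding conformal_fol_def using BH_eq_gm_smult_iff[OF alt eps] by blast
qed

lemma semi_riem_fol_iff:
  assumes alt: "\<And>u. br c u u = (\<lambda>k. 0)" and eps: "\<forall>i. eps i = 1 \<or> eps i = -1"
  shows "semi_riem_fol c eps \<longleftrightarrow> (\<forall>k\<in>{iA, iB, iC, iT}.
    c k iX iX = 0 \<and> c k iY iY = 0 \<and> eps iX * c k iY iX + eps iY * c k iX iY = 0)"
  using BH_eq_gm_smult_iff[OF alt eps, of "\<lambda>k. 0"]
  by (simp add: semi_riem_fol_def Vsp_def)

theorem lemma8p1:
  fixes c :: "idx \<Rightarrow> idx \<Rightarrow> idx \<Rightarrow> real" and eps :: "idx \<Rightarrow> real"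
    and x1 y1 x2 y2 :: real
  assumes lie: "lie_constants c"
    and eps: "\<forall>i. eps i = 1 \<or> eps i = -1"
    and AB: "br c (bas iA) (bas iB) = (\<lambda>k. 2 * bas iC k)"
    and CA: "br c (bas iC) (bas iA) = (\<lambda>k. 2 * bas iB k)"
    and BC: "br c (bas iB) (bas iC) = (\<lambda>k. 2 * bas iA k)"
    and TE: "\<forall>E\<in>{iA, iB, iC}. br c (bas iT) (bas E) = (\<lambda>k. 0)"
    and EH: "\<forall>E\<in>{iA, iB, iC}. \<forall>H\<in>{iX, iY}. br c (bas E) (bas H) \<in> Vsp"
    and TX: "br c (bas iT) (bas iX) iX = x1" "br c (bas iT) (bas iX) iY = y1"
    and TY: "br c (bas iT) (bas iY) iX = x2" "br c (bas iT) (bas iY) iY = y2"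
    and XY: "br c (bas iX) (bas iY) iY = 0"
  shows "(conformal_fol c eps \<longleftrightarrow> x1 = y2 \<and> eps iX * x2 + eps iY * y1 = 0) \<and>
         (conformal_fol c eps \<longrightarrow> (semi_riem_fol c eps \<longleftrightarrow> x1 = 0 \<and> y2 = 0))"
proof -
  have alt: "\<And>u. br c u u = (\<lambda>k. 0)"
    using lie unfolding lie_constants_def by blast
  have su2_H: "c k h iX = 0" "c k h iY = 0" if "k \<in> {iA, iB, iC}" "h \<in> {iX, iY}" for k h
    using EH that by (auto simp: br_bas_bas Vsp_def)
  have T_H: "c iT iX iX = x1" "c iT iX iY = y1" "c iT iY iX = x2" "c iT iY iY = y2"
    using TX TY by (simp_all add: br_bas_bas)
  have "conformal_fol c eps \<longleftrightarrow> x1 = y2 \<and> eps iX * x2 + eps iY * y1 = 0"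
    by (simp add: conformal_fol_iff[OF alt eps] su2_H T_H add.commute)
  moreover have "semi_riem_fol c eps \<longleftrightarrow> x1 = 0 \<and> y2 = 0 \<and> eps iX * x2 + eps iY * y1 = 0"
    by (simp add: semi_riem_fol_iff[OF alt eps] su2_H T_H add.commute)
  ultimately show ?thesis
    by blast
qed

end
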